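(* Let $\varepsilon,K>0$ be constants and let $k\geq 2/\varepsilon$ be an integer. Let $n$ be sufficiently large in terms of $\varepsilon,K,k$ and let $G$ be an $n$-vertex graph with $e(G)\geq\frac16 n^{4/3+\varepsilon}$ and $\Delta(G)\leq Kn^{1/3+\varepsilon}$ in which every edge is contained in at most $n^{1/3+2\varepsilon}$ copies of $C_4$. Then $G$ has at least $6^{-2k}n^{(1/3+\varepsilon)2k}$ homomorphic $2k$-cycles $(x_1,\dots,x_{2k})$ such that $x_1,\dots,x_{2k}$ are distinct and $d(x_i,x_{i+2})\leq n^{2\varepsilon}$ for each $1\leq i\leq 2k$ (indices modulo $2k$).
   Context: A homomorphic $2k$-cycle is a tuple $(x_1,\dots,x_{2k})\in V(G)^{2k}$ with $x_ix_{i+1}\in E(G)$ for all $i$ (indices mod $2k$). $d(u,v)$ denotes the codegree, i.e. the number of common neighbours of $u$ and $v$. A copy of $C_4$ is a subgraph isomorphic to the $4$-cycle. *)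

theory Defs
  imports "HOL-Analysis.Analysis" "HOL-Library.FuncSet"
begin

definition simple_graph :: "'a set \<Rightarrow> ('a \<Rightarrow> 'a \<Rightarrow> bool) \<Rightarrow> bool" where
  "simple_graph V E \<longleftrightarrow> finite V \<and> (\<forall>u v. E u v \<longrightarrow> u \<in> V \<and> v \<in> V)
     \<and> (\<forall>u v. E u v \<longrightarrow> E v u) \<and> (\<forall>v. \<not> E v v)"

definition edges :: "'a set \<Rightarrow> ('a \<Rightarrow> 'a \<Rightarrow> bool) \<Rightarrow> 'a set set" where
  "edges V E = {{u, v} | u v. u \<in> V \<and> v \<in> V \<and> E u v}"

definition degree :: "'a set \<Rightarrow> ('a \<Rightarrow> 'a \<Rightarrow> bool) \<Rightarrow> 'a \<Rightarrow> nat" where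
  "degree V E v = card {u \<in> V. E v u}"

definition codegree :: "'a set \<Rightarrow> ('a \<Rightarrow> 'a \<Rightarrow> bool) \<Rightarrow> 'a \<Rightarrow> 'a \<Rightarrow> nat" where
  "codegree V E u v = card {w \<in> V. E u w \<and> E v w}"

definition C4_copies :: "'a set \<Rightarrow> ('a \<Rightarrow> 'a \<Rightarrow> bool) \<Rightarrow> 'a set set set" where
  "C4_copies V E = {{{a, b}, {b, c}, {c, d}, {d, a}} | a b c d.
      a \<in> V \<and> b \<in> V \<and> c \<in> V \<and> d \<in> V \<and> distinct [a, b, c, d]
      \<and> E a b \<and> E b c \<and> E c d \<and> E d a}"

definition hom_cycles :: "'a set \<Rightarrow> ('a \<Rightarrow> 'a \<Rightarrow> bool) \<Rightarrow> nat \<Rightarrow> (nat \<Rightarrow> 'a) set" where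
  "hom_cycles V E m = {x \<in> {0..<m} \<rightarrow>\<^sub>E V. \<forall>i<m. E (x i) (x ((i + 1) mod m))}"

end

theory Submission
  imports Defs
begin

(* Let t_j be the number of closed walks of length 2j, which is also the number of
   homomorphic 2j-cycles.  By Cauchy-Schwarz, t_j is log-convex in j, so
   t_(k-1)^k <= n t_k^(k-1).  The number g_j of all walks of length 2j is
   log-convex as well, with g_0 = n, g_1 >= (2 e(G))^2 / n and g_k <= n t_k; hence
   t_k >= (2 e(G) / n)^(2k) >= (n^(1/3+eps) / 3)^(2k).

   A homomorphic 2k-cycle that is not good either repeats a vertex,
   x_i = x_(i+d) with 2 <= d <= 2k-2, or has x_i ~= x_(i+2) with codegree above
   tau = n^(2 eps).  Log-convexity of the closed walks at a single vertex bounds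
   the cycles of the first kind by Delta t_(k-1) for each pair (i, d).  For the
   second kind, the copies of C4 through the edges at u dominate
   sum_w d(u,w) (d(u,w) - 1), so the partners w of u with d(u,w) > tau carry total
   codegree at most Delta M / (tau - 1), M being the bound on C4 copies per edge.
   Hence at least t_k - beta t_(k-1) cycles are good, and for large n the two
   estimates on t_k give beta t_(k-1) <= t_k / 2. *)

lemma card_eq_sum_card_fibres:
  "finite A \<Longrightarrow> finite B \<Longrightarrow> f ` A \<subseteq> B \<Longrightarrow> card A = (\<Sum>b\<in>B. card {a\<in>A. f a = b})"
  using sum.group[of A B f "\<lambda>_. 1::nat"] by simp

lemma card_ordered_pairs_distinct:
  "finite A \<Longrightarrow> card {(x, y). x \<in> A \<and> y \<in> A \<and> x \<noteq> y} = card A * (card A - 1)"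
proof -
  assume "finite A"
  have "{(x, y). x \<in> A \<and> y \<in> A \<and> x \<noteq> y} = (SIGMA x:A. A - {x})"
    by auto
  then show ?thesis
    using \<open>finite A\<close> by simp
qed

lemma four_cycle_edges_inj:
  assumes C: "{{u, x}, {x, w}, {w, y}, {y, u}} = {{u, x}, {x, w'}, {w', y'}, {y', u}}"
    and "distinct [u, x, w, y]" "distinct [u, x, w', y']"
  shows "w = w' \<and> y = y'"
proof -
  have "{x, w} \<in> {{u, x}, {x, w'}, {w', y'}, {y', u}}"
    by (subst C[symmetric]) simp
  then have "w = w'"
    using assms(2,3) by (auto simp: doubleton_eq_iff)
  moreover have "{w, y} \<in> {{u, x}, {x, w'}, {w', y'}, {y', u}}"
    by (subst C[symmetric]) simp
  ultimately show ?thesis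
    using assms(2,3) by (auto simp: doubleton_eq_iff)
qed

lemma mult_le_of_pow_le:
  fixes b c S T :: real
  assumes "S ^ Suc j \<le> c * T ^ j" and "c * b ^ Suc j \<le> T"
    and "0 \<le> b" "0 \<le> c" "0 \<le> S" "0 \<le> T"
  shows "b * S \<le> T"
proof -
  have "(b * S) ^ Suc j = b ^ Suc j * S ^ Suc j"
    by (simp add: power_mult_distrib)
  also have "\<dots> \<le> b ^ Suc j * (c * T ^ j)"
    using assms by (intro mult_left_mono) auto
  also have "\<dots> = (c * b ^ Suc j) * T ^ j"
    by simp
  also have "\<dots> \<le> T * T ^ j"
    using assms by (intro mult_right_mono) auto
  finally have "(b * S) ^ Suc j \<le> T ^ Suc j"
    by simp
  then show ?thesis
    using assms power_le_imp_le_base by blast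
qed

section \<open>Log-convex sequences\<close>

locale log_convex_seq =
  fixes s :: "nat \<Rightarrow> real"
  assumes nonneg: "0 \<le> s j"
    and log_convex: "s (Suc j) ^ 2 \<le> s j * s (Suc (Suc j))"
begin

lemma mult_le_mult_shift: "p \<le> q \<Longrightarrow> s (Suc p) * s q \<le> s p * s (Suc q)"
proof (induction q)
  case 0
  then show ?case by (simp add: mult.commute)
next
  case (Suc q)
  show ?case
  proof (cases "p = Suc q")
    case True
    then show ?thesis by (simp add: mult.commute)
  next
    case False
    then have IH: "s (Suc p) * s q \<le> s p * s (Suc q)"
      using Suc by simp
    show ?thesis
    proof (cases "s q * s (Suc q) = 0")
      case True
      then have "s (Suc q) = 0"
        using log_convex[of q] zero_le_power2[of "s (Suc q)"] by auto
      then show ?thesis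
        using nonneg by (simp add: mult_nonneg_nonneg)
    next
      case False
      then have pos: "0 < s q * s (Suc q)"
        using nonneg by (simp add: less_le)
      have "(s (Suc p) * s (Suc q)) * (s q * s (Suc q)) = (s (Suc p) * s q) * s (Suc q) ^ 2"
        by (simp add: power2_eq_square algebra_simps)
      also have "\<dots> \<le> (s p * s (Suc q)) * (s q * s (Suc (Suc q)))"
        by (rule mult_mono[OF IH log_convex]) (use nonneg in auto)
      also have "\<dots> = (s p * s (Suc (Suc q))) * (s q * s (Suc q))"
        by (simp add: algebra_simps)
      finally show ?thesis
        using pos by (meson mult_le_cancel_right_pos)
    qed
  qed
qed

lemma mult_le_first_mult: "s (Suc p) * s (Suc q) \<le> s 1 * s (Suc (p + q))"
proof -
  have le: "s (Suc p) * s (Suc q) \<le> s 1 * s (Suc (p + q))" if "p \<le> q" for p q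
    using that
  proof (induction p arbitrary: q)
    case 0
    then show ?case by simp
  next
    case (Suc p)
    have "s (Suc (Suc p)) * s (Suc q) \<le> s (Suc p) * s (Suc (Suc q))"
      using mult_le_mult_shift[of "Suc p" "Suc q"] Suc.prems by simp
    also have "\<dots> \<le> s 1 * s (Suc (Suc p + q))"
      using Suc.IH[of "Suc q"] Suc.prems by simp
    finally show ?case .
  qed
  show ?thesis
    using le[of p q] le[of q p] by (cases "p \<le> q") (auto simp: mult.commute add.commute)
qed

lemma pow_le_zeroth_mult_pow: "s k ^ Suc k \<le> s 0 * s (Suc k) ^ k"
proof -
  have "s k ^ Suc i \<le> s (k - i) * s (Suc k) ^ i" if "i \<le> k" for i
    using that
  proof (induction i)
    case 0
    then show ?case by simp
  next
    case (Suc i)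
    have "s k ^ Suc (Suc i) = s k * s k ^ Suc i"
      by simp
    also have "\<dots> \<le> s k * (s (k - i) * s (Suc k) ^ i)"
      using Suc nonneg by (intro mult_left_mono) auto
    also have "\<dots> = (s (Suc (k - Suc i)) * s k) * s (Suc k) ^ i"
      using Suc.prems by (simp add: Suc_diff_Suc)
    also have "\<dots> \<le> (s (k - Suc i) * s (Suc k)) * s (Suc k) ^ i"
      using mult_le_mult_shift[of "k - Suc i" k] nonneg by (intro mult_right_mono) auto
    also have "\<dots> = s (k - Suc i) * s (Suc k) ^ Suc i"
      by simp
    finally show ?case .
  qed
  from this[of k] show ?thesis by simp
qed

lemma first_pow_le: "s 1 ^ Suc j \<le> s 0 ^ j * s (Suc j)"
proof (induction j)
  case 0
  then show ?case by simp
next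
  case (Suc j)
  have "s 1 ^ Suc (Suc j) = s 1 * s 1 ^ Suc j"
    by simp
  also have "\<dots> \<le> s 1 * (s 0 ^ j * s (Suc j))"
    using Suc nonneg by (intro mult_left_mono) auto
  also have "\<dots> = s 0 ^ j * (s 1 * s (Suc j))"
    by simp
  also have "\<dots> \<le> s 0 ^ j * (s 0 * s (Suc (Suc j)))"
    using mult_le_mult_shift[of 0 "Suc j"] nonneg by (intro mult_left_mono) auto
  finally show ?case by (simp add: mult_ac)
qed

end

section \<open>Walk counts\<close>

(* The entry (u, v) of the m-th power of the adjacency matrix. *)
primrec walk_count :: "'a set \<Rightarrow> ('a \<Rightarrow> 'a \<Rightarrow> bool) \<Rightarrow> nat \<Rightarrow> 'a \<Rightarrow> 'a \<Rightarrow> real" where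
  "walk_count V E 0 u v = (if u = v then 1 else 0)"
| "walk_count V E (Suc m) u v = (\<Sum>z\<in>V. walk_count V E m u z * (if E z v then 1 else 0))"

declare walk_count.simps(2)[simp del]

locale sgraph =
  fixes V :: "'a set" and E :: "'a \<Rightarrow> 'a \<Rightarrow> bool"
  assumes simple: "simple_graph V E"
begin

lemma finite_V: "finite V"
  using simple by (simp add: simple_graph_def)

lemma adj_in_V: "E u v \<Longrightarrow> u \<in> V \<and> v \<in> V"
  using simple by (simp add: simple_graph_def)

lemma adj_sym: "E u v \<Longrightarrow> E v u"
  using simple by (simp add: simple_graph_def)

lemma adj_irrefl: "\<not> E v v"
  using simple by (simp add: simple_graph_def)

abbreviation W where "W \<equiv> walk_count V E"

lemma W_nonneg: "0 \<le> W m u v"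
  by (induction m arbitrary: v) (auto simp: walk_count.simps intro!: sum_nonneg)

lemma W_add: "v \<in> V \<Longrightarrow> W (a + b) u v = (\<Sum>z\<in>V. W a u z * W b z v)"
proof (induction b arbitrary: v)
  case 0
  then show ?case using finite_V by (simp add: if_distrib cong: if_cong)
next
  case (Suc b)
  have "W (a + Suc b) u v = (\<Sum>z\<in>V. W (a + b) u z * (if E z v then 1 else 0))"
    by (simp add: walk_count.simps)
  also have "\<dots> = (\<Sum>z\<in>V. (\<Sum>y\<in>V. W a u y * W b y z) * (if E z v then 1 else 0))"
    using Suc.IH by (intro sum.cong) auto
  also have "\<dots> = (\<Sum>y\<in>V. W a u y * (\<Sum>z\<in>V. W b y z * (if E z v then 1 else 0)))"
    by (simp add: sum_distrib_left sum_distrib_right mult.assoc) (rule sum.swap)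
  finally show ?case by (simp add: walk_count.simps)
qed

lemma W_one: "u \<in> V \<Longrightarrow> W (Suc 0) u v = (if E u v then 1 else 0)"
proof -
  assume "u \<in> V"
  have "W (Suc 0) u v = (\<Sum>z\<in>V. if z = u then (if E u v then 1 else 0) else 0)"
    unfolding walk_count.simps by (intro sum.cong) auto
  then show ?thesis
    using finite_V \<open>u \<in> V\<close> by simp
qed

lemma W_commute: "u \<in> V \<Longrightarrow> v \<in> V \<Longrightarrow> W m u v = W m v u"
proof (induction m arbitrary: u v)
  case 0
  then show ?case by simp
next
  case (Suc m)
  have "W (Suc m) u v = (\<Sum>z\<in>V. W (Suc 0) u z * W m z v)"
    using W_add[of v 1 m u] Suc.prems by simp
  also have "\<dots> = (\<Sum>z\<in>V. W m v z * (if E z u then 1 else 0))"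
    using Suc by (intro sum.cong) (auto simp: W_one adj_sym)
  finally show ?case by (simp add: walk_count.simps)
qed

lemma W_two: "u \<in> V \<Longrightarrow> w \<in> V \<Longrightarrow> W 2 u w = real (codegree V E u w)"
proof -
  assume u: "u \<in> V" and w: "w \<in> V"
  have "W 2 u w = (\<Sum>z\<in>V. W (Suc 0) u z * W (Suc 0) z w)"
    using W_add[OF w, of "Suc 0" "Suc 0" u] by (simp add: numeral_2_eq_2)
  also have "\<dots> = (\<Sum>z\<in>V. if E u z \<and> E w z then 1 else 0)"
    using u by (intro sum.cong refl) (auto simp: W_one adj_sym)
  also have "\<dots> = real (codegree V E u w)"
    using finite_V by (simp add: sum.If_cases codegree_def Int_def conj_commute)
  finally show ?thesis .
qed

lemma sum_W_squared: "u \<in> V \<Longrightarrow> (\<Sum>z\<in>V. W a u z ^ 2) = W (2 * a) u u"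
  using W_add[of u a a u] by (simp add: mult_2 W_commute power2_eq_square cong: sum.cong)

lemma W_add_squared_le:
  assumes "u \<in> V" "v \<in> V"
  shows "W (a + b) u v ^ 2 \<le> W (2 * a) u u * W (2 * b) v v"
proof -
  have "W (a + b) u v = (\<Sum>z\<in>V. W a u z * W b v z)"
    using W_add assms by (simp add: W_commute)
  then have "W (a + b) u v ^ 2 \<le> (\<Sum>z\<in>V. W a u z ^ 2) * (\<Sum>z\<in>V. W b v z ^ 2)"
    using Cauchy_Schwarz_ineq_sum by metis
  then show ?thesis
    using sum_W_squared assms by simp
qed

lemma log_convex_closed_walks_at:
  assumes v: "v \<in> V"
  shows "log_convex_seq (\<lambda>j. W (2 * j) v v)"
proof
  fix j
  show "0 \<le> W (2 * j) v v"
    by (rule W_nonneg)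
  have "2 * Suc j = j + Suc (Suc j)"
    by simp
  then show "W (2 * Suc j) v v ^ 2 \<le> W (2 * j) v v * W (2 * Suc (Suc j)) v v"
    using W_add_squared_le[OF v v, of j "Suc (Suc j)"] by (simp only:)
qed

lemma finite_edges: "finite (edges V E)"
proof -
  have "edges V E \<subseteq> Pow V"
    by (auto simp: edges_def)
  then show ?thesis
    using finite_V by (meson finite_Pow_iff finite_subset)
qed

lemma sum_degree: "(\<Sum>v\<in>V. degree V E v) = 2 * card (edges V E)"
proof -
  define D where "D = {p \<in> V \<times> V. E (fst p) (snd p)}"
  have "(\<Sum>v\<in>V. degree V E v) = card (SIGMA v:V. {u\<in>V. E v u})"
    using finite_V by (simp add: degree_def)
  also have "(SIGMA v:V. {u\<in>V. E v u}) = D"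
    by (auto simp: D_def)
  also have "card D = (\<Sum>e\<in>edges V E. card {p\<in>D. {fst p, snd p} = e})"
    using finite_V finite_edges
    by (intro card_eq_sum_card_fibres) (auto simp: D_def edges_def, blast)
  also have "\<dots> = (\<Sum>e\<in>edges V E. 2)"
  proof (intro sum.cong refl)
    fix e
    assume "e \<in> edges V E"
    then obtain a b where ab: "e = {a, b}" "a \<in> V" "b \<in> V" "E a b"
      by (auto simp: edges_def)
    then have "a \<noteq> b"
      using adj_irrefl by auto
    have "{p\<in>D. {fst p, snd p} = e} = {(a, b), (b, a)}"
      using ab adj_sym[OF ab(4)] by (auto simp: D_def doubleton_eq_iff)
    then show "card {p\<in>D. {fst p, snd p} = e} = 2"
      using \<open>a \<noteq> b\<close> by simp
  qed
  finally show ?thesis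
    by simp
qed

lemma W_mult_W_le:
  assumes v: "v \<in> V" and a: "2 \<le> a" and b: "2 \<le> b" and ab: "even (a + b)"
  shows "W a v v * W b v v \<le> W 2 v v * W (a + b - 2) v v"
proof -
  interpret s: log_convex_seq "\<lambda>j. W (2 * j) v v"
    by (rule log_convex_closed_walks_at[OF v])
  show ?thesis
  proof (cases "even a")
    case True
    obtain a' b' where "a = 2 * a'" "b = 2 * b'"
      using True ab by (metis evenE even_add)
    then obtain p q where "a = 2 * Suc p" "b = 2 * Suc q"
      using a b by (cases a'; cases b') auto
    then show ?thesis
      using s.mult_le_first_mult[of p q] by simp
  next
    case False
    obtain a' b' where "a = 2 * a' + 1" "b = 2 * b' + 1"
      using False ab by (metis oddE even_add)
    then obtain p q where "a = 2 * Suc p + 1" "b = 2 * Suc q + 1"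
      using a b by (cases a'; cases b') auto
    then have pq: "a = Suc p + Suc (Suc p)" "b = Suc q + Suc (Suc q)"
      "a + b - 2 = 2 * Suc (Suc (p + q))"
      by simp_all
    have A: "W a v v ^ 2 \<le> W (2 * Suc p) v v * W (2 * Suc (Suc p)) v v"
      using W_add_squared_le[OF v v, of "Suc p" "Suc (Suc p)"] pq(1) by simp
    have B: "W b v v ^ 2 \<le> W (2 * Suc q) v v * W (2 * Suc (Suc q)) v v"
      using W_add_squared_le[OF v v, of "Suc q" "Suc (Suc q)"] pq(2) by simp
    have C: "W (2 * Suc p) v v * W (2 * Suc (Suc q)) v v \<le> W 2 v v * W (a + b - 2) v v"
      using s.mult_le_first_mult[of p "Suc q"] pq(3) by simp
    have D: "W (2 * Suc (Suc p)) v v * W (2 * Suc q) v v \<le> W 2 v v * W (a + b - 2) v v"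
      using s.mult_le_first_mult[of "Suc p" q] pq(3) by simp
    have "(W a v v * W b v v) ^ 2 = W a v v ^ 2 * W b v v ^ 2"
      by (simp add: power_mult_distrib)
    also have "\<dots> \<le> (W (2 * Suc p) v v * W (2 * Suc (Suc p)) v v)
        * (W (2 * Suc q) v v * W (2 * Suc (Suc q)) v v)"
      by (rule mult_mono[OF A B]) (auto simp: W_nonneg)
    also have "\<dots> = (W (2 * Suc p) v v * W (2 * Suc (Suc q)) v v)
        * (W (2 * Suc (Suc p)) v v * W (2 * Suc q) v v)"
      by (simp add: algebra_simps)
    also have "\<dots> \<le> (W 2 v v * W (a + b - 2) v v) * (W 2 v v * W (a + b - 2) v v)"
      by (rule mult_mono[OF C D]) (auto simp: W_nonneg)
    finally show ?thesis
      using W_nonneg by (metis mult_nonneg_nonneg power2_eq_square power2_le_imp_le)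
  qed
qed

definition closed_walks :: "nat \<Rightarrow> real" where
  "closed_walks j = (\<Sum>v\<in>V. W (2 * j) v v)"

lemma closed_walks_zero: "closed_walks 0 = card V"
  by (simp add: closed_walks_def)

lemma log_convex_closed_walks: "log_convex_seq closed_walks"
proof
  fix j
  show "0 \<le> closed_walks j"
    by (simp add: closed_walks_def W_nonneg sum_nonneg)
  let ?r = "\<lambda>i v. sqrt (W (2 * i) v v)"
  have "W (2 * Suc j) v v \<le> ?r j v * ?r (Suc (Suc j)) v" if "v \<in> V" for v
    using log_convex_seq.log_convex[OF log_convex_closed_walks_at[OF that], of j]
    by (metis real_le_rsqrt real_sqrt_mult)
  then have "closed_walks (Suc j) \<le> (\<Sum>v\<in>V. ?r j v * ?r (Suc (Suc j)) v)"
    unfolding closed_walks_def by (rule sum_mono)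
  then have "closed_walks (Suc j) ^ 2 \<le> (\<Sum>v\<in>V. ?r j v * ?r (Suc (Suc j)) v) ^ 2"
    by (simp add: closed_walks_def W_nonneg sum_nonneg power_mono)
  also have "\<dots> \<le> (\<Sum>v\<in>V. ?r j v ^ 2) * (\<Sum>v\<in>V. ?r (Suc (Suc j)) v ^ 2)"
    by (rule Cauchy_Schwarz_ineq_sum)
  also have "\<dots> = closed_walks j * closed_walks (Suc (Suc j))"
    by (simp add: W_nonneg closed_walks_def)
  finally show "closed_walks (Suc j) ^ 2 \<le> closed_walks j * closed_walks (Suc (Suc j))" .
qed

definition walks_into :: "nat \<Rightarrow> 'a \<Rightarrow> real" where
  "walks_into p z = (\<Sum>u\<in>V. W p u z)"

definition all_walks :: "nat \<Rightarrow> real" where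
  "all_walks j = (\<Sum>u\<in>V. \<Sum>v\<in>V. W (2 * j) u v)"

lemma sum_W_add: "(\<Sum>u\<in>V. \<Sum>v\<in>V. W (p + q) u v) = (\<Sum>z\<in>V. walks_into p z * walks_into q z)"
proof -
  have "(\<Sum>u\<in>V. \<Sum>v\<in>V. W (p + q) u v) = (\<Sum>u\<in>V. \<Sum>v\<in>V. \<Sum>z\<in>V. W p u z * W q v z)"
    by (intro sum.cong refl) (simp add: W_add W_commute)
  also have "\<dots> = (\<Sum>u\<in>V. \<Sum>z\<in>V. \<Sum>v\<in>V. W p u z * W q v z)"
    by (rule sum.cong[OF refl]) (rule sum.swap)
  also have "\<dots> = (\<Sum>z\<in>V. \<Sum>u\<in>V. \<Sum>v\<in>V. W p u z * W q v z)"
    by (rule sum.swap)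
  also have "\<dots> = (\<Sum>z\<in>V. walks_into p z * walks_into q z)"
    by (simp add: walks_into_def sum_product)
  finally show ?thesis .
qed

lemma all_walks_eq_sum_squares: "all_walks j = (\<Sum>z\<in>V. walks_into j z ^ 2)"
  using sum_W_add[of j j] by (simp add: all_walks_def mult_2 power2_eq_square)

lemma log_convex_all_walks: "log_convex_seq all_walks"
proof
  fix j
  show "0 \<le> all_walks j"
    by (simp add: all_walks_def W_nonneg sum_nonneg)
  have "2 * Suc j = j + Suc (Suc j)"
    by simp
  then have "all_walks (Suc j) = (\<Sum>z\<in>V. walks_into j z * walks_into (Suc (Suc j)) z)"
    using sum_W_add[of j "Suc (Suc j)"] unfolding all_walks_def by (simp only:)
  then show "all_walks (Suc j) ^ 2 \<le> all_walks j * all_walks (Suc (Suc j))"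
    using Cauchy_Schwarz_ineq_sum by (metis all_walks_eq_sum_squares)
qed

lemma all_walks_zero: "all_walks 0 = card V"
  using finite_V by (simp add: all_walks_def)

lemma all_walks_le: "all_walks k \<le> card V * closed_walks k"
proof -
  have "all_walks k = (\<Sum>z\<in>V. (\<Sum>v\<in>V. W k v z * 1) ^ 2)"
    by (simp add: all_walks_eq_sum_squares walks_into_def)
  also have "\<dots> \<le> (\<Sum>z\<in>V. (\<Sum>v\<in>V. W k v z ^ 2) * (\<Sum>v\<in>V. 1 ^ 2))"
    by (rule sum_mono) (rule Cauchy_Schwarz_ineq_sum)
  also have "\<dots> = card V * (\<Sum>z\<in>V. \<Sum>v\<in>V. W k z v ^ 2)"
    by (simp add: sum_distrib_left W_commute mult.commute cong: sum.cong)
  also have "\<dots> = card V * closed_walks k"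
    by (simp add: closed_walks_def sum_W_squared)
  finally show ?thesis .
qed

lemma walks_into_one: "z \<in> V \<Longrightarrow> walks_into (Suc 0) z = real (degree V E z)"
  using finite_V
  by (simp add: walks_into_def W_commute[of _ z] W_one sum.If_cases degree_def Int_def conj_commute
      cong: sum.cong)

lemma closed_walks_ge:
  assumes "0 < card V"
  shows "(2 * real (card (edges V E)) / card V) ^ (2 * k) \<le> closed_walks k"
proof (cases k)
  case 0
  then show ?thesis
    using assms by (simp add: closed_walks_zero)
next
  case (Suc j)
  interpret a: log_convex_seq all_walks
    by (rule log_convex_all_walks)
  define n where "n = real (card V)"
  have n: "0 < n"
    using assms by (simp add: n_def)
  have "(2 * real (card (edges V E))) ^ 2 = (\<Sum>v\<in>V. real (degree V E v) * 1) ^ 2"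
    by (simp flip: of_nat_sum add: sum_degree)
  also have "\<dots> \<le> (\<Sum>v\<in>V. real (degree V E v) ^ 2) * (\<Sum>v\<in>V. 1 ^ 2)"
    by (rule Cauchy_Schwarz_ineq_sum)
  also have "\<dots> = all_walks 1 * n"
    by (simp add: all_walks_eq_sum_squares walks_into_one n_def)
  finally have "(2 * real (card (edges V E)) / n) ^ 2 \<le> all_walks 1 / n"
    using n by (simp add: field_simps power2_eq_square)
  then have "((2 * real (card (edges V E)) / n) ^ 2) ^ k \<le> (all_walks 1 / n) ^ k"
    by (intro power_mono) auto
  also have "\<dots> = all_walks 1 ^ Suc j / n ^ k"
    using Suc by (simp add: power_divide)
  also have "\<dots> \<le> n ^ j * all_walks k / n ^ k"
    using a.first_pow_le[of j] n Suc all_walks_zero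
    by (intro divide_right_mono) (simp_all add: n_def)
  also have "\<dots> \<le> n ^ j * (n * closed_walks k) / n ^ k"
    using all_walks_le[of k] n by (intro divide_right_mono mult_left_mono) (auto simp: n_def)
  also have "\<dots> = closed_walks k"
    using n Suc by simp
  finally show ?thesis
    by (simp add: n_def power_mult)
qed

end

section \<open>Homomorphic cycles as closed walks\<close>

context sgraph
begin

definition walks :: "nat \<Rightarrow> 'a \<Rightarrow> 'a \<Rightarrow> (nat \<Rightarrow> 'a) set" where
  "walks m u v = {x \<in> {0..m} \<rightarrow>\<^sub>E V. x 0 = u \<and> x m = v \<and> (\<forall>i<m. E (x i) (x (Suc i)))}"

lemma finite_walks: "finite (walks m u v)"
  by (rule finite_subset[of _ "{0..m} \<rightarrow>\<^sub>E V"]) (auto simp: walks_def finite_PiE finite_V)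

lemma walks_split_bij:
  assumes "d \<le> m"
  shows "bij_betw (\<lambda>x. (restrict x {0..d}, restrict (\<lambda>i. x (i + d)) {0..m - d}))
           {x \<in> walks m u v. x d = w} (walks d u w \<times> walks (m - d) w v)"
proof (rule bij_betw_byWitness[where f' = "\<lambda>(y, z). restrict (\<lambda>i. if i \<le> d then y i else z (i - d)) {0..m}"])
  show "\<forall>x\<in>{x \<in> walks m u v. x d = w}.
      (\<lambda>(y, z). restrict (\<lambda>i. if i \<le> d then y i else z (i - d)) {0..m})
        (restrict x {0..d}, restrict (\<lambda>i. x (i + d)) {0..m - d}) = x"
    using assms by (auto simp: walks_def PiE_def extensional_def fun_eq_iff)
  show "\<forall>yz\<in>walks d u w \<times> walks (m - d) w v.
      (\<lambda>x. (restrict x {0..d}, restrict (\<lambda>i. x (i + d)) {0..m - d}))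
        ((\<lambda>(y, z). restrict (\<lambda>i. if i \<le> d then y i else z (i - d)) {0..m}) yz) = yz"
    using assms by (auto simp: walks_def PiE_def extensional_def fun_eq_iff)
  show "(\<lambda>x. (restrict x {0..d}, restrict (\<lambda>i. x (i + d)) {0..m - d})) ` {x \<in> walks m u v. x d = w}
      \<subseteq> walks d u w \<times> walks (m - d) w v"
  proof
    fix p
    assume "p \<in> (\<lambda>x. (restrict x {0..d}, restrict (\<lambda>i. x (i + d)) {0..m - d})) ` {x \<in> walks m u v. x d = w}"
    then obtain x where x: "x \<in> walks m u v" "x d = w"
      and p: "p = (restrict x {0..d}, restrict (\<lambda>i. x (i + d)) {0..m - d})"
      by auto
    have "\<forall>i<m - d. E (x (i + d)) (x (Suc i + d))"
      using x by (auto simp: walks_def)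
    then show "p \<in> walks d u w \<times> walks (m - d) w v"
      using x assms by (auto simp: walks_def p)
  qed
  show "(\<lambda>(y, z). restrict (\<lambda>i. if i \<le> d then y i else z (i - d)) {0..m}) ` (walks d u w \<times> walks (m - d) w v)
      \<subseteq> {x \<in> walks m u v. x d = w}"
  proof
    fix x
    assume "x \<in> (\<lambda>(y, z). restrict (\<lambda>i. if i \<le> d then y i else z (i - d)) {0..m}) ` (walks d u w \<times> walks (m - d) w v)"
    then obtain y z where y: "y \<in> walks d u w" and z: "z \<in> walks (m - d) w v"
      and x: "x = restrict (\<lambda>i. if i \<le> d then y i else z (i - d)) {0..m}"
      by auto
    have "E (x i) (x (Suc i))" if "i < m" for i
    proof (cases "i < d")
      case True
      then show ?thesis
        using y that by (auto simp: walks_def x)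
    next
      case False
      then have "i - d < m - d" "Suc i - d = Suc (i - d)"
        using that by auto
      then show ?thesis
        using y z that False by (auto simp: walks_def x)
    qed
    then show "x \<in> {x \<in> walks m u v. x d = w}"
      using y z assms by (auto simp: walks_def x PiE_def Pi_def)
  qed
qed

lemma card_walks_split:
  "d \<le> m \<Longrightarrow> card {x \<in> walks m u v. x d = w} = card (walks d u w) * card (walks (m - d) w v)"
  using bij_betw_same_card[OF walks_split_bij] by (simp add: card_cartesian_product)

lemma walks_zero: "u \<in> V \<Longrightarrow> walks 0 u v = (if u = v then {restrict (\<lambda>_. u) {0}} else {})"
  by (auto simp: walks_def PiE_def extensional_def fun_eq_iff)

lemma walks_one: "walks (Suc 0) u v = (if E u v then {restrict (\<lambda>i. if i = 0 then u else v) {0..1}} else {})"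
  by (auto simp: walks_def PiE_def extensional_def fun_eq_iff le_Suc_eq dest: adj_in_V)

lemma card_walks: "u \<in> V \<Longrightarrow> real (card (walks m u v)) = W m u v"
proof (induction m arbitrary: v)
  case 0
  then show ?case by (simp add: walks_zero)
next
  case (Suc m)
  have "card (walks (Suc m) u v) = (\<Sum>w\<in>V. card {x \<in> walks (Suc m) u v. x m = w})"
    using finite_walks finite_V by (intro card_eq_sum_card_fibres) (auto simp: walks_def)
  also have "\<dots> = (\<Sum>w\<in>V. card (walks m u w) * card (walks (Suc 0) w v))"
    by (simp add: card_walks_split)
  finally show ?case
    using Suc.IH Suc.prems
    by (simp add: walks_one of_nat_sum walk_count.simps if_distrib cong: if_cong)
qed

lemma finite_hom_cycles: "finite (hom_cycles V E m)"
  by (rule finite_subset[of _ "{0..<m} \<rightarrow>\<^sub>E V"]) (auto simp: hom_cycles_def finite_PiE finite_V)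

lemma hom_cycles_walks_bij:
  assumes m: "0 < m"
  shows "bij_betw (\<lambda>x. restrict (\<lambda>i. x (i mod m)) {0..m}) {x \<in> hom_cycles V E m. x 0 = u} (walks m u u)"
proof (rule bij_betw_byWitness[where f' = "\<lambda>y. restrict y {0..<m}"])
  show "\<forall>x\<in>{x \<in> hom_cycles V E m. x 0 = u}. restrict (restrict (\<lambda>i. x (i mod m)) {0..m}) {0..<m} = x"
    by (auto simp: hom_cycles_def PiE_def extensional_def fun_eq_iff)
  show "\<forall>y\<in>walks m u u. restrict (\<lambda>i. restrict y {0..<m} (i mod m)) {0..m} = y"
  proof
    fix y
    assume y: "y \<in> walks m u u"
    show "restrict (\<lambda>i. restrict y {0..<m} (i mod m)) {0..m} = y"
    proof
      fix i
      show "restrict (\<lambda>i. restrict y {0..<m} (i mod m)) {0..m} i = y i"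
        using y m by (cases "i < m"; cases "i = m") (auto simp: walks_def PiE_def extensional_def)
    qed
  qed
  show "(\<lambda>x. restrict (\<lambda>i. x (i mod m)) {0..m}) ` {x \<in> hom_cycles V E m. x 0 = u} \<subseteq> walks m u u"
  proof
    fix y
    assume "y \<in> (\<lambda>x. restrict (\<lambda>i. x (i mod m)) {0..m}) ` {x \<in> hom_cycles V E m. x 0 = u}"
    then obtain x where x: "x \<in> hom_cycles V E m" "x 0 = u" and y: "y = restrict (\<lambda>i. x (i mod m)) {0..m}"
      by auto
    have "E (y i) (y (Suc i))" if "i < m" for i
      using x that m by (auto simp: hom_cycles_def y)
    then show "y \<in> walks m u u"
      using x m by (auto simp: walks_def hom_cycles_def y PiE_def Pi_def)
  qed
  show "(\<lambda>y. restrict y {0..<m}) ` walks m u u \<subseteq> {x \<in> hom_cycles V E m. x 0 = u}"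
  proof
    fix x
    assume "x \<in> (\<lambda>y. restrict y {0..<m}) ` walks m u u"
    then obtain y where y: "y \<in> walks m u u" and x: "x = restrict y {0..<m}"
      by auto
    have "E (x i) (x (Suc i mod m))" if "i < m" for i
      using y that m by (cases "Suc i = m") (auto simp: walks_def x)
    then show "x \<in> {x \<in> hom_cycles V E m. x 0 = u}"
      using y m by (auto simp: hom_cycles_def walks_def x PiE_def Pi_def)
  qed
qed

lemma card_hom_cycles_pair:
  assumes m: "0 < m" and d: "d < m"
  shows "real (card {x \<in> hom_cycles V E m. P (x 0) (x d)})
    = (\<Sum>u\<in>V. \<Sum>w\<in>V. if P u w then W d u w * W (m - d) w u else 0)"
proof -
  let ?H = "{x \<in> hom_cycles V E m. P (x 0) (x d)}"
  have fibre: "card {x \<in> ?H. (x 0, x d) = (u, w)} = (if P u w then card (walks d u w) * card (walks (m - d) w u) else 0)"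
    if "u \<in> V" for u w
  proof -
    have "bij_betw (\<lambda>x. restrict (\<lambda>i. x (i mod m)) {0..m})
        {x \<in> {x \<in> hom_cycles V E m. x 0 = u}. x d = w} {y \<in> walks m u u. y d = w}"
      using d by (intro bij_betw_Collect[OF hom_cycles_walks_bij[OF m]]) auto
    then have "card {x \<in> {x \<in> hom_cycles V E m. x 0 = u}. x d = w} = card (walks d u w) * card (walks (m - d) w u)"
      using bij_betw_same_card card_walks_split[of d m u u w] d by fastforce
    moreover have "{x \<in> ?H. (x 0, x d) = (u, w)} = (if P u w then {x \<in> {x \<in> hom_cycles V E m. x 0 = u}. x d = w} else {})"
      by auto
    ultimately show ?thesis
      by simp
  qed
  have "finite ?H"
    by (rule finite_subset[OF _ finite_hom_cycles]) auto
  then have "card ?H = (\<Sum>uw\<in>V \<times> V. card {x \<in> ?H. (x 0, x d) = uw})"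
    using finite_V m d by (intro card_eq_sum_card_fibres) (auto simp: hom_cycles_def)
  also have "\<dots> = (\<Sum>u\<in>V. \<Sum>w\<in>V. card {x \<in> ?H. (x 0, x d) = (u, w)})"
    by (simp add: sum.cartesian_product split_def prod_eq_iff)
  also have "\<dots> = (\<Sum>u\<in>V. \<Sum>w\<in>V. if P u w then card (walks d u w) * card (walks (m - d) w u) else 0)"
    by (intro sum.cong refl) (rule fibre)
  finally show ?thesis
    by (simp add: of_nat_sum card_walks if_distrib cong: sum.cong if_cong)
qed

lemma card_hom_cycles:
  assumes "0 < m"
  shows "real (card (hom_cycles V E m)) = (\<Sum>v\<in>V. W m v v)"
proof -
  have "W 0 u w * W m w u = (if u = w then W m u u else 0)" for u w
    by simp
  then show ?thesis
    using card_hom_cycles_pair[OF assms, of 0 "\<lambda>_ _. True"] finite_V assms by simp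
qed

lemma card_hom_cycles_even: "0 < k \<Longrightarrow> real (card (hom_cycles V E (2 * k))) = closed_walks k"
  by (simp add: card_hom_cycles closed_walks_def)

end

definition rotate_cycle :: "nat \<Rightarrow> nat \<Rightarrow> (nat \<Rightarrow> 'a) \<Rightarrow> nat \<Rightarrow> 'a" where
  "rotate_cycle m j x = restrict (\<lambda>t. x ((t + j) mod m)) {0..<m}"

lemma rotate_cycle_rotate_cycle:
  "0 < m \<Longrightarrow> rotate_cycle m a (rotate_cycle m b x) = rotate_cycle m (a + b) x"
  by (auto simp: rotate_cycle_def fun_eq_iff mod_add_left_eq add.assoc)

context sgraph
begin

lemma rotate_cycle_in_hom_cycles:
  assumes m: "0 < m" and x: "x \<in> hom_cycles V E m"
  shows "rotate_cycle m j x \<in> hom_cycles V E m"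
proof -
  have "E (rotate_cycle m j x t) (rotate_cycle m j x ((t + 1) mod m))" if "t < m" for t
  proof -
    have "E (x ((t + j) mod m)) (x (((t + j) mod m + 1) mod m))"
      using x m by (auto simp: hom_cycles_def)
    moreover have "((t + j) mod m + 1) mod m = ((t + 1) mod m + j) mod m"
      by (metis add.commute add.left_commute mod_add_left_eq)
    ultimately show ?thesis
      using that m by (simp add: rotate_cycle_def)
  qed
  then show ?thesis
    using x m by (auto simp: hom_cycles_def rotate_cycle_def PiE_def Pi_def)
qed

lemma rotate_cycle_period: "x \<in> hom_cycles V E m \<Longrightarrow> rotate_cycle m m x = x"
  by (auto simp: rotate_cycle_def hom_cycles_def PiE_def extensional_def fun_eq_iff)

lemma card_hom_cycles_rotate:
  assumes m: "0 < m" and i: "i < m" and d: "d < m"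
  shows "card {x \<in> hom_cycles V E m. R (x i) (x ((i + d) mod m))} = card {x \<in> hom_cycles V E m. R (x 0) (x d)}"
proof (rule bij_betw_same_card[of "rotate_cycle m i"],
    rule bij_betw_byWitness[where f' = "rotate_cycle m (m - i)"])
  have inv: "rotate_cycle m a (rotate_cycle m b x) = x" if "x \<in> hom_cycles V E m" "a + b = m" for a b x
    using that m by (simp add: rotate_cycle_rotate_cycle rotate_cycle_period)
  show "\<forall>x\<in>{x \<in> hom_cycles V E m. R (x i) (x ((i + d) mod m))}. rotate_cycle m (m - i) (rotate_cycle m i x) = x"
    "\<forall>x\<in>{x \<in> hom_cycles V E m. R (x 0) (x d)}. rotate_cycle m i (rotate_cycle m (m - i) x) = x"
    using inv i by auto
  show "rotate_cycle m i ` {x \<in> hom_cycles V E m. R (x i) (x ((i + d) mod m))} \<subseteq> {x \<in> hom_cycles V E m. R (x 0) (x d)}"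
  proof
    fix y
    assume "y \<in> rotate_cycle m i ` {x \<in> hom_cycles V E m. R (x i) (x ((i + d) mod m))}"
    then obtain x where "x \<in> hom_cycles V E m" "R (x i) (x ((i + d) mod m))" "y = rotate_cycle m i x"
      by auto
    then show "y \<in> {x \<in> hom_cycles V E m. R (x 0) (x d)}"
      using rotate_cycle_in_hom_cycles[OF m, of x i] i d by (simp add: rotate_cycle_def add.commute)
  qed
  have "i + d + (m - i) = d + m"
    using i by simp
  then have "((i + d) mod m + (m - i)) mod m = (d + m) mod m"
    by (simp only: mod_add_left_eq)
  then have mod: "(i + (m - i)) mod m = 0" "((i + d) mod m + (m - i)) mod m = d"
    using i d by simp_all
  show "rotate_cycle m (m - i) ` {x \<in> hom_cycles V E m. R (x 0) (x d)} \<subseteq> {x \<in> hom_cycles V E m. R (x i) (x ((i + d) mod m))}"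
  proof
    fix y
    assume "y \<in> rotate_cycle m (m - i) ` {x \<in> hom_cycles V E m. R (x 0) (x d)}"
    then obtain x where x: "x \<in> hom_cycles V E m" "R (x 0) (x d)" and y: "y = rotate_cycle m (m - i) x"
      by auto
    have "y i = x 0" "y ((i + d) mod m) = x d"
      using mod i m by (simp_all add: y rotate_cycle_def)
    then show "y \<in> {x \<in> hom_cycles V E m. R (x i) (x ((i + d) mod m))}"
      using rotate_cycle_in_hom_cycles[OF m x(1)] x(2) y by simp
  qed
qed

end

section \<open>Cycles that are not good\<close>

(* Relative to t_(k-1), cycles repeating a vertex contribute at most 4 k^2 Delta and
   cycles with a pair of large codegree at most 2 k Delta M / (tau - 1). *)
definition bad_cycle_factor :: "nat \<Rightarrow> real \<Rightarrow> real \<Rightarrow> real \<Rightarrow> real" where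
  "bad_cycle_factor k \<Delta> M \<tau> = 4 * real k ^ 2 * \<Delta> + 2 * real k * (\<Delta> * M / (\<tau> - 1))"

context sgraph
begin

definition good_cycles :: "nat \<Rightarrow> real \<Rightarrow> (nat \<Rightarrow> 'a) set" where
  "good_cycles m \<tau> = {x \<in> hom_cycles V E m. inj_on x {0..<m}
     \<and> (\<forall>i<m. real (codegree V E (x i) (x ((i + 2) mod m))) \<le> \<tau>)}"

lemma finite_C4_copies: "finite (C4_copies V E)"
proof -
  have "C4_copies V E \<subseteq> Pow (Pow V)"
    by (auto simp: C4_copies_def)
  then show ?thesis
    using finite_V by (meson finite_Pow_iff finite_subset)
qed

lemma four_cycle_in_C4_copies:
  assumes "distinct [a, b, c, d]" "a \<in> V" "b \<in> V" "c \<in> V" "d \<in> V" "E a b" "E b c" "E c d" "E d a"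
  shows "{{a, b}, {b, c}, {c, d}, {d, a}} \<in> C4_copies V E"
  unfolding C4_copies_def using assms by blast

(* Each triple (w, x, y) with x ~= y common neighbours of u and w spans the 4-cycle
   u x w y, which contains the edge ux and determines the triple. *)
lemma sum_codegree_pairs_le_C4:
  assumes u: "u \<in> V"
  shows "(\<Sum>w\<in>V - {u}. codegree V E u w * (codegree V E u w - 1))
    \<le> (\<Sum>x\<in>{x \<in> V. E u x}. card {C \<in> C4_copies V E. {u, x} \<in> C})"
proof -
  define N where "N w = {z \<in> V. E u z \<and> E w z}" for w
  define T where "T = (SIGMA w:V - {u}. {(x, y). x \<in> N w \<and> y \<in> N w \<and> x \<noteq> y})"
  define g where "g = (\<lambda>(w, x, y). (x, {{u, x}, {x, w}, {w, y}, {y, u}}))"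
  have finite_N: "finite (N w)" for w
    using finite_V by (simp add: N_def)
  have T: "distinct [u, x, w, y] \<and> x \<in> V \<and> w \<in> V \<and> y \<in> V \<and> E u x \<and> E x w \<and> E w y \<and> E y u"
    if "(w, x, y) \<in> T" for w x y
  proof -
    have *: "w \<in> V \<and> w \<noteq> u \<and> x \<in> V \<and> y \<in> V \<and> x \<noteq> y \<and> E u x \<and> E w x \<and> E u y \<and> E w y"
      using that by (auto simp: T_def N_def)
    then have "u \<noteq> x" "u \<noteq> y" "w \<noteq> x" "w \<noteq> y"
      using adj_irrefl by metis+
    with * show ?thesis
      using adj_sym[of w x] adj_sym[of u y] by auto
  qed
  have "finite {(x, y). x \<in> N w \<and> y \<in> N w \<and> x \<noteq> y}" for w
    by (rule finite_subset[of _ "N w \<times> N w"]) (auto simp: finite_N)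
  then have "card T = (\<Sum>w\<in>V - {u}. card {(x, y). x \<in> N w \<and> y \<in> N w \<and> x \<noteq> y})"
    using finite_V by (simp add: T_def)
  moreover have "card {(x, y). x \<in> N w \<and> y \<in> N w \<and> x \<noteq> y} = codegree V E u w * (codegree V E u w - 1)" for w
    by (simp only: card_ordered_pairs_distinct[OF finite_N]) (simp add: codegree_def N_def)
  ultimately have "(\<Sum>w\<in>V - {u}. codegree V E u w * (codegree V E u w - 1)) = card T"
    by simp
  also have "\<dots> \<le> card (SIGMA x:{x \<in> V. E u x}. {C \<in> C4_copies V E. {u, x} \<in> C})"
  proof (rule card_inj_on_le)
    show "inj_on g T"
    proof (rule inj_onI)
      fix t t'
      assume "t \<in> T" "t' \<in> T" and g: "g t = g t'"
      obtain w x y w' x' y' where t: "t = (w, x, y)" and t': "t' = (w', x', y')"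
        by (cases t; cases t')
      have "x = x' \<and> {{u, x}, {x, w}, {w, y}, {y, u}} = {{u, x'}, {x', w'}, {w', y'}, {y', u}}"
        using g unfolding g_def t t' prod.case prod.inject by assumption
      then have x: "x' = x"
        by (elim conjE) (rule sym)
      have C: "{{u, x}, {x, w}, {w, y}, {y, u}} = {{u, x}, {x, w'}, {w', y'}, {y', u}}"
        using \<open>x = x' \<and> _\<close> unfolding x by (rule conjunct2)
      have "distinct [u, x, w, y]" "distinct [u, x, w', y']"
        using T \<open>t \<in> T\<close> \<open>t' \<in> T\<close> unfolding t t' x by blast+
      then show "t = t'"
        using four_cycle_edges_inj[OF C] t t' x by simp
    qed
    have "{{u, x}, {x, w}, {w, y}, {y, u}} \<in> C4_copies V E" if "(w, x, y) \<in> T" for w x y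
      using T[OF that] u by (intro four_cycle_in_C4_copies) auto
    then show "g ` T \<subseteq> (SIGMA x:{x \<in> V. E u x}. {C \<in> C4_copies V E. {u, x} \<in> C})"
      using T by (auto simp: g_def)
    show "finite (SIGMA x:{x \<in> V. E u x}. {C \<in> C4_copies V E. {u, x} \<in> C})"
      using finite_V finite_C4_copies by auto
  qed
  also have "\<dots> = (\<Sum>x\<in>{x \<in> V. E u x}. card {C \<in> C4_copies V E. {u, x} \<in> C})"
    using finite_V finite_C4_copies by simp
  finally show ?thesis .
qed

lemma sum_large_codegree_le:
  assumes u: "u \<in> V" and \<tau>: "1 < \<tau>" and M: "0 \<le> M"
    and deg: "real (degree V E u) \<le> \<Delta>"
    and C4: "\<And>e. e \<in> edges V E \<Longrightarrow> real (card {C \<in> C4_copies V E. e \<in> C}) \<le> M"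
  shows "(\<Sum>w\<in>V - {u}. if \<tau> < real (codegree V E u w) then real (codegree V E u w) else 0)
    \<le> \<Delta> * M / (\<tau> - 1)"
proof -
  let ?c = "\<lambda>w. codegree V E u w"
  have "(if \<tau> < real (?c w) then real (?c w) else 0) \<le> real (?c w * (?c w - 1)) / (\<tau> - 1)" for w
  proof (cases "\<tau> < real (?c w)")
    case True
    then have "real (?c w) * (\<tau> - 1) \<le> real (?c w) * (real (?c w) - 1)"
      by (intro mult_left_mono) auto
    moreover have "real (?c w * (?c w - 1)) = real (?c w) * (real (?c w) - 1)"
      using True \<tau> by (simp add: of_nat_diff)
    ultimately show ?thesis
      using True \<tau> by (simp add: field_simps)
  qed (use \<tau> in simp)
  then have "(\<Sum>w\<in>V - {u}. if \<tau> < real (?c w) then real (?c w) else 0)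
      \<le> real (\<Sum>w\<in>V - {u}. ?c w * (?c w - 1)) / (\<tau> - 1)"
    by (simp add: sum_divide_distrib sum_mono)
  also have "\<dots> \<le> (\<Sum>x\<in>{x \<in> V. E u x}. real (card {C \<in> C4_copies V E. {u, x} \<in> C})) / (\<tau> - 1)"
    using sum_codegree_pairs_le_C4[OF u] \<tau> by (intro divide_right_mono) (simp_all flip: of_nat_sum)
  also have "\<dots> \<le> (\<Sum>x\<in>{x \<in> V. E u x}. M) / (\<tau> - 1)"
    using C4 u \<tau> by (intro divide_right_mono sum_mono) (auto simp: edges_def)
  also have "\<dots> \<le> \<Delta> * M / (\<tau> - 1)"
    using deg M \<tau> by (intro divide_right_mono) (simp_all add: degree_def mult_right_mono)
  finally show ?thesis .
qed

lemma card_cycles_repeat_at_le: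
  assumes k: "2 \<le> k" and d: "2 \<le> d" "d \<le> 2 * k - 2" and i: "i < 2 * k"
    and deg: "\<And>v. v \<in> V \<Longrightarrow> real (degree V E v) \<le> \<Delta>"
  shows "real (card {x \<in> hom_cycles V E (2 * k). x i = x ((i + d) mod (2 * k))}) \<le> \<Delta> * closed_walks (k - 1)"
proof -
  have "real (card {x \<in> hom_cycles V E (2 * k). x i = x ((i + d) mod (2 * k))})
      = real (card {x \<in> hom_cycles V E (2 * k). x 0 = x d})"
    using card_hom_cycles_rotate[of "2 * k" i d "(=)"] k d i by simp
  also have "\<dots> = (\<Sum>u\<in>V. W d u u * W (2 * k - d) u u)"
    using card_hom_cycles_pair[of "2 * k" d "(=)"] k d finite_V by (simp add: if_distrib cong: if_cong)
  also have "\<dots> \<le> (\<Sum>u\<in>V. W 2 u u * W (2 * (k - 1)) u u)"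
  proof (rule sum_mono)
    fix u
    assume "u \<in> V"
    have "d + (2 * k - d) - 2 = 2 * (k - 1)"
      using d k by simp
    then show "W d u u * W (2 * k - d) u u \<le> W 2 u u * W (2 * (k - 1)) u u"
      using W_mult_W_le[OF \<open>u \<in> V\<close>, of d "2 * k - d"] d by simp
  qed
  also have "\<dots> \<le> (\<Sum>u\<in>V. \<Delta> * W (2 * (k - 1)) u u)"
    using deg by (intro sum_mono mult_right_mono) (simp_all add: W_two codegree_def degree_def W_nonneg)
  also have "\<dots> = \<Delta> * closed_walks (k - 1)"
    by (simp add: closed_walks_def sum_distrib_left)
  finally show ?thesis .
qed

(* Cauchy-Schwarz and AM-GM give W (2j) w u <= (W (2j) w w + W (2j) u u) / 2, and the
   symmetry of f moves both halves onto u. *)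
lemma sum_symmetric_weight_W_le:
  assumes f_commute: "\<And>u w. f u w = f w u" and f_nonneg: "\<And>u w. 0 \<le> f u w"
  shows "(\<Sum>u\<in>V. \<Sum>w\<in>V. f u w * W (2 * j) w u) \<le> (\<Sum>u\<in>V. W (2 * j) u u * (\<Sum>w\<in>V. f u w))"
proof -
  define s where "s u = W (2 * j) u u" for u
  have "(\<Sum>u\<in>V. \<Sum>w\<in>V. f u w * W (2 * j) w u) \<le> (\<Sum>u\<in>V. \<Sum>w\<in>V. f u w * ((s w + s u) / 2))"
  proof (intro sum_mono mult_left_mono)
    fix u w
    assume u: "u \<in> V" and w: "w \<in> V"
    have "W (2 * j) w u \<le> sqrt (s w * s u)"
      using W_add_squared_le[OF w u, of j j] by (simp add: s_def mult_2 real_le_rsqrt)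
    also have "\<dots> \<le> (s w + s u) / 2"
      by (rule arith_geo_mean_sqrt) (simp_all add: s_def W_nonneg)
    finally show "W (2 * j) w u \<le> (s w + s u) / 2" .
  qed (rule f_nonneg)
  also have "\<dots> = (\<Sum>u\<in>V. \<Sum>w\<in>V. f u w * s w) / 2 + (\<Sum>u\<in>V. \<Sum>w\<in>V. f u w * s u) / 2"
    by (simp add: sum_divide_distrib sum.distrib algebra_simps add_divide_distrib)
  also have "(\<Sum>u\<in>V. \<Sum>w\<in>V. f u w * s w) = (\<Sum>u\<in>V. \<Sum>w\<in>V. f u w * s u)"
    by (subst sum.swap) (simp add: f_commute)
  also have "(\<Sum>u\<in>V. \<Sum>w\<in>V. f u w * s u) / 2 + (\<Sum>u\<in>V. \<Sum>w\<in>V. f u w * s u) / 2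
      = (\<Sum>u\<in>V. s u * (\<Sum>w\<in>V. f u w))"
    by (simp add: sum_distrib_left mult.commute)
  finally show ?thesis
    unfolding s_def .
qed

lemma card_cycles_large_codegree_at_le:
  assumes k: "2 \<le> k" and i: "i < 2 * k" and \<tau>: "1 < \<tau>" and M: "0 \<le> M"
    and deg: "\<And>v. v \<in> V \<Longrightarrow> real (degree V E v) \<le> \<Delta>"
    and C4: "\<And>e. e \<in> edges V E \<Longrightarrow> real (card {C \<in> C4_copies V E. e \<in> C}) \<le> M"
  shows "real (card {x \<in> hom_cycles V E (2 * k). x i \<noteq> x ((i + 2) mod (2 * k))
      \<and> \<tau> < real (codegree V E (x i) (x ((i + 2) mod (2 * k))))})
    \<le> \<Delta> * M / (\<tau> - 1) * closed_walks (k - 1)"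
proof -
  define R where "R u w \<longleftrightarrow> u \<noteq> w \<and> \<tau> < real (codegree V E u w)" for u w
  define f where "f u w = (if R u w then real (codegree V E u w) else 0)" for u w
  have "real (card {x \<in> hom_cycles V E (2 * k). x i \<noteq> x ((i + 2) mod (2 * k))
      \<and> \<tau> < real (codegree V E (x i) (x ((i + 2) mod (2 * k))))})
      = real (card {x \<in> hom_cycles V E (2 * k). R (x 0) (x 2)})"
    using card_hom_cycles_rotate[of "2 * k" i 2 R] k i by (simp add: R_def)
  also have "\<dots> = (\<Sum>u\<in>V. \<Sum>w\<in>V. if R u w then W 2 u w * W (2 * k - 2) w u else 0)"
    using card_hom_cycles_pair[of "2 * k" 2 R] k by simp
  also have "\<dots> = (\<Sum>u\<in>V. \<Sum>w\<in>V. f u w * W (2 * (k - 1)) w u)"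
    by (intro sum.cong refl) (auto simp: f_def W_two right_diff_distrib')
  also have "\<dots> \<le> (\<Sum>u\<in>V. W (2 * (k - 1)) u u * (\<Sum>w\<in>V. f u w))"
    by (rule sum_symmetric_weight_W_le) (auto simp: f_def R_def codegree_def conj_commute)
  also have "\<dots> \<le> (\<Sum>u\<in>V. W (2 * (k - 1)) u u * (\<Delta> * M / (\<tau> - 1)))"
  proof (intro sum_mono mult_left_mono)
    fix u
    assume "u \<in> V"
    have "(\<Sum>w\<in>V. f u w) = (\<Sum>w\<in>V - {u}. f u w)"
      using finite_V \<open>u \<in> V\<close> by (simp add: sum.remove f_def R_def)
    also have "\<dots> = (\<Sum>w\<in>V - {u}. if \<tau> < real (codegree V E u w) then real (codegree V E u w) else 0)"
      by (intro sum.cong) (auto simp: f_def R_def)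
    finally show "(\<Sum>w\<in>V. f u w) \<le> \<Delta> * M / (\<tau> - 1)"
      using sum_large_codegree_le[OF \<open>u \<in> V\<close> \<tau> M deg[OF \<open>u \<in> V\<close>] C4] by simp
  qed (simp add: W_nonneg)
  also have "\<dots> = \<Delta> * M / (\<tau> - 1) * closed_walks (k - 1)"
    by (simp add: closed_walks_def sum_distrib_left mult.commute)
  finally show ?thesis .
qed

lemma not_good_cycle_cases:
  assumes k: "2 \<le> k" and x: "x \<in> hom_cycles V E (2 * k)" and bad: "x \<notin> good_cycles (2 * k) \<tau>"
  obtains i d where "i < 2 * k" "d \<in> {2..2 * k - 2}" "x i = x ((i + d) mod (2 * k))"
  | i where "i < 2 * k" "x i \<noteq> x ((i + 2) mod (2 * k))"
      "\<tau> < real (codegree V E (x i) (x ((i + 2) mod (2 * k))))"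
proof (cases "inj_on x {0..<2 * k}")
  case False
  then obtain a b where ab: "a < b" "b < 2 * k" "x a = x b"
    unfolding inj_on_def by (metis atLeastLessThan_iff linorder_neqE_nat)
  have adj: "E (x j) (x ((j + 1) mod (2 * k)))" if "j < 2 * k" for j
    using x that by (auto simp: hom_cycles_def)
  have "b \<noteq> a + 1"
    using adj[of a] ab adj_irrefl by auto
  moreover have "b - a \<noteq> 2 * k - 1"
  proof
    assume "b - a = 2 * k - 1"
    then have "a = 0" "b = 2 * k - 1"
      using ab by auto
    then show False
      using adj[of "2 * k - 1"] ab adj_irrefl k by auto
  qed
  ultimately have "b - a \<in> {2..2 * k - 2}" "(a + (b - a)) mod (2 * k) = b"
    using ab by auto
  then show ?thesis
    using that(1)[of a "b - a"] ab by auto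
next
  case True
  then obtain i where i: "i < 2 * k" "\<tau> < real (codegree V E (x i) (x ((i + 2) mod (2 * k))))"
    using x bad by (auto simp: good_cycles_def not_le)
  have "(i + 2) mod (2 * k) \<noteq> i"
    using i k by (cases "i + 2 < 2 * k") (auto simp: mod_if)
  moreover have "(i + 2) mod (2 * k) < 2 * k"
    using k by simp
  ultimately have "x i \<noteq> x ((i + 2) mod (2 * k))"
    using True i by (metis atLeastLessThan_iff inj_onD zero_le)
  then show ?thesis
    using that(2) i by blast
qed

definition repeated_vertex_cycles :: "nat \<Rightarrow> (nat \<Rightarrow> 'a) set" where
  "repeated_vertex_cycles k = (\<Union>i<2 * k. \<Union>d\<in>{2..2 * k - 2}.
     {x \<in> hom_cycles V E (2 * k). x i = x ((i + d) mod (2 * k))})"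

definition large_codegree_cycles :: "nat \<Rightarrow> real \<Rightarrow> (nat \<Rightarrow> 'a) set" where
  "large_codegree_cycles k \<tau> = (\<Union>i<2 * k. {x \<in> hom_cycles V E (2 * k). x i \<noteq> x ((i + 2) mod (2 * k))
     \<and> \<tau> < real (codegree V E (x i) (x ((i + 2) mod (2 * k))))})"

lemma hom_cycles_subset_good_or_bad:
  assumes "2 \<le> k"
  shows "hom_cycles V E (2 * k) \<subseteq> good_cycles (2 * k) \<tau> \<union> repeated_vertex_cycles k \<union> large_codegree_cycles k \<tau>"
proof
  fix x
  assume x: "x \<in> hom_cycles V E (2 * k)"
  show "x \<in> good_cycles (2 * k) \<tau> \<union> repeated_vertex_cycles k \<union> large_codegree_cycles k \<tau>"
  proof (cases "x \<in> good_cycles (2 * k) \<tau>")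
    case False
    then show ?thesis
      using x unfolding repeated_vertex_cycles_def large_codegree_cycles_def
      by (elim not_good_cycle_cases[OF assms x]) blast+
  qed simp
qed

lemma card_repeated_vertex_cycles_le:
  assumes k: "2 \<le> k" and \<Delta>: "0 \<le> \<Delta>" and deg: "\<And>v. v \<in> V \<Longrightarrow> real (degree V E v) \<le> \<Delta>"
  shows "real (card (repeated_vertex_cycles k)) \<le> 4 * real k ^ 2 * \<Delta> * closed_walks (k - 1)"
proof -
  let ?S = "closed_walks (k - 1)"
  have "real (card (repeated_vertex_cycles k))
      \<le> real (\<Sum>i<2 * k. \<Sum>d\<in>{2..2 * k - 2}. card {x \<in> hom_cycles V E (2 * k). x i = x ((i + d) mod (2 * k))})"
    unfolding repeated_vertex_cycles_def
    by (rule of_nat_mono, rule order_trans[OF card_UN_le], simp, rule sum_mono, rule card_UN_le) simp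
  also have "\<dots> \<le> (\<Sum>i<2 * k. \<Sum>d\<in>{2..2 * k - 2}. \<Delta> * ?S)"
    unfolding of_nat_sum using card_cycles_repeat_at_le[OF k _ _ _ deg] by (intro sum_mono) auto
  also have "\<dots> = real (2 * k) * real (card {2..2 * k - 2}) * (\<Delta> * ?S)"
    by simp
  also have "\<dots> \<le> real (2 * k) * real (2 * k) * (\<Delta> * ?S)"
    using \<Delta> log_convex_seq.nonneg[OF log_convex_closed_walks] by (intro mult_right_mono mult_left_mono) auto
  finally show ?thesis
    by (simp add: power2_eq_square)
qed

lemma card_large_codegree_cycles_le:
  assumes k: "2 \<le> k" and \<tau>: "1 < \<tau>" and M: "0 \<le> M"
    and deg: "\<And>v. v \<in> V \<Longrightarrow> real (degree V E v) \<le> \<Delta>"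
    and C4: "\<And>e. e \<in> edges V E \<Longrightarrow> real (card {C \<in> C4_copies V E. e \<in> C}) \<le> M"
  shows "real (card (large_codegree_cycles k \<tau>)) \<le> 2 * real k * (\<Delta> * M / (\<tau> - 1)) * closed_walks (k - 1)"
proof -
  have "real (card (large_codegree_cycles k \<tau>)) \<le> real (\<Sum>i<2 * k. card {x \<in> hom_cycles V E (2 * k).
      x i \<noteq> x ((i + 2) mod (2 * k)) \<and> \<tau> < real (codegree V E (x i) (x ((i + 2) mod (2 * k))))})"
    unfolding large_codegree_cycles_def by (rule of_nat_mono, rule card_UN_le) simp
  also have "\<dots> \<le> (\<Sum>i<2 * k. \<Delta> * M / (\<tau> - 1) * closed_walks (k - 1))"
    unfolding of_nat_sum using card_cycles_large_codegree_at_le[OF k _ \<tau> M deg C4] by (intro sum_mono) auto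
  finally show ?thesis
    by simp
qed

lemma card_good_cycles_ge:
  assumes k: "2 \<le> k" and \<tau>: "1 < \<tau>" and M: "0 \<le> M" and \<Delta>: "0 \<le> \<Delta>"
    and deg: "\<And>v. v \<in> V \<Longrightarrow> real (degree V E v) \<le> \<Delta>"
    and C4: "\<And>e. e \<in> edges V E \<Longrightarrow> real (card {C \<in> C4_copies V E. e \<in> C}) \<le> M"
  shows "closed_walks k - bad_cycle_factor k \<Delta> M \<tau> * closed_walks (k - 1)
    \<le> real (card (good_cycles (2 * k) \<tau>))"
proof -
  let ?U = "good_cycles (2 * k) \<tau> \<union> repeated_vertex_cycles k \<union> large_codegree_cycles k \<tau>"
  have "finite ?U"
    by (rule finite_subset[OF _ finite_hom_cycles])
      (auto simp: good_cycles_def repeated_vertex_cycles_def large_codegree_cycles_def)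
  then have "card (hom_cycles V E (2 * k)) \<le> card ?U"
    using hom_cycles_subset_good_or_bad[OF k] by (rule card_mono)
  also have "\<dots> \<le> card (good_cycles (2 * k) \<tau>) + card (repeated_vertex_cycles k) + card (large_codegree_cycles k \<tau>)"
    by (meson add_le_mono card_Un_le le_trans order_refl)
  finally have "closed_walks k \<le> real (card (good_cycles (2 * k) \<tau>))
      + real (card (repeated_vertex_cycles k)) + real (card (large_codegree_cycles k \<tau>))"
    using k card_hom_cycles_even[of k] by linarith
  then show ?thesis
    using card_repeated_vertex_cycles_le[OF k \<Delta> deg] card_large_codegree_cycles_le[OF k \<tau> M deg C4]
    by (simp add: bad_cycle_factor_def algebra_simps)
qed

lemma good_cycles_two: "real (card V) \<le> \<tau> \<Longrightarrow> good_cycles 2 \<tau> = hom_cycles V E 2"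
proof -
  assume \<tau>: "real (card V) \<le> \<tau>"
  have "x \<in> good_cycles 2 \<tau>" if x: "x \<in> hom_cycles V E 2" for x
  proof -
    have "\<forall>i<2. E (x i) (x ((i + 1) mod 2))"
      using x by (simp add: hom_cycles_def)
    from this[rule_format, of 0] have "E (x 0) (x 1)"
      by simp
    then have "inj_on x {0..<2}"
      using adj_irrefl by (auto simp: inj_on_def less_2_cases_iff)
    moreover have "codegree V E a b \<le> card V" for a b
      using finite_V by (auto simp: codegree_def intro: card_mono)
    then have "\<forall>i<2. real (codegree V E (x i) (x ((i + 2) mod 2))) \<le> \<tau>"
      using \<tau> by (meson of_nat_le_iff order_trans)
    ultimately show ?thesis
      using x by (simp add: good_cycles_def)
  qed
  then show ?thesis
    by (auto simp: good_cycles_def)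
qed

(* For k = 1 the codegrees d(x_i, x_(i+2)) are degrees, so tau >= n makes every
   homomorphic 2-cycle good. *)
lemma card_good_cycles_ge_half:
  assumes k: "0 < k" and \<tau>: "2 \<le> \<tau>" "k = 1 \<Longrightarrow> real (card V) \<le> \<tau>"
    and M: "0 \<le> M" and \<Delta>: "0 \<le> \<Delta>"
    and deg: "\<And>v. v \<in> V \<Longrightarrow> real (degree V E v) \<le> \<Delta>"
    and C4: "\<And>e. e \<in> edges V E \<Longrightarrow> real (card {C \<in> C4_copies V E. e \<in> C}) \<le> M"
    and large: "real (card V) * (2 * bad_cycle_factor k \<Delta> M \<tau>) ^ k \<le> closed_walks k"
  shows "closed_walks k / 2 \<le> real (card (good_cycles (2 * k) \<tau>))"
proof -
  interpret cw: log_convex_seq closed_walks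
    by (rule log_convex_closed_walks)
  show ?thesis
  proof (cases "k = 1")
    case True
    then show ?thesis
      using \<tau> good_cycles_two card_hom_cycles_even[of 1] cw.nonneg[of 1] by simp
  next
    case False
    then obtain j where j: "k = Suc j" and k2: "2 \<le> k"
      using k by (cases k) auto
    define \<beta> where "\<beta> = bad_cycle_factor k \<Delta> M \<tau>"
    have b: "0 \<le> 2 * \<beta>"
      using \<tau> M \<Delta> by (simp add: \<beta>_def bad_cycle_factor_def)
    have pow: "closed_walks j ^ Suc j \<le> real (card V) * closed_walks (Suc j) ^ j"
      using cw.pow_le_zeroth_mult_pow[of j] by (simp add: closed_walks_zero)
    have "2 * \<beta> * closed_walks j \<le> closed_walks (Suc j)"
      using large unfolding j \<beta>_def
      by (rule mult_le_of_pow_le[OF pow _ b[unfolded \<beta>_def j]]) (simp_all add: cw.nonneg)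
    moreover have "closed_walks (Suc j) - \<beta> * closed_walks j \<le> real (card (good_cycles (2 * k) \<tau>))"
      using card_good_cycles_ge[OF k2 _ M \<Delta> deg C4, of \<tau>] \<tau> j by (simp add: \<beta>_def)
    ultimately show ?thesis
      unfolding j by linarith
  qed
qed

end

section \<open>Choice of parameters\<close>

lemma six_powr_mult_powr_le:
  fixes x a :: real
  assumes x: "0 < x" and k: "0 < k"
  shows "6 powr (- 2 * real k) * x powr (a * (2 * real k)) \<le> ((x powr a) ^ 2 / 9) ^ k / 2"
proof -
  have "6 powr (- 2 * real k) * x powr (a * (2 * real k)) = ((x powr a) ^ 2 / 36) ^ k"
    using x by (simp add: powr_minus_divide powr_powr[symmetric] powr_realpow power_mult power_divide
        flip: powr_powr)
  moreover have "(4::real) ^ 1 \<le> 4 ^ k"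
    using k by (intro power_increasing) auto
  then have "2 * ((x powr a) ^ 2 / 36) ^ k \<le> 4 ^ k * ((x powr a) ^ 2 / 36) ^ k"
    by (intro mult_right_mono) auto
  ultimately show ?thesis
    by (simp add: power_mult_distrib[symmetric])
qed

lemma two_bad_cycle_factor_le:
  fixes n \<epsilon> K :: real
  assumes n: "1 \<le> n" and \<tau>: "2 \<le> n powr (2 * \<epsilon>)" and K: "0 < K"
  shows "2 * bad_cycle_factor k (K * n powr (1/3 + \<epsilon>)) (n powr (1/3 + 2 * \<epsilon>)) (n powr (2 * \<epsilon>))
    \<le> 8 * K * (real k ^ 2 + real k) * n powr (2/3 + \<epsilon>)"
proof -
  define p q \<tau> where "p = n powr (1/3)" and "q = n powr \<epsilon>" and "\<tau> = n powr (2 * \<epsilon>)"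
  define \<Delta> where "\<Delta> = K * p * q"
  have p: "1 \<le> p"
    using n by (simp add: p_def ge_one_powr_ge_zero)
  have \<Delta>: "0 \<le> \<Delta>" "K * n powr (1/3 + \<epsilon>) = \<Delta>"
    using K n by (simp_all add: \<Delta>_def p_def q_def powr_add)
  have "n powr (1/3 + 2 * \<epsilon>) = p * \<tau>"
    by (simp add: p_def \<tau>_def powr_add)
  moreover have "\<tau> \<le> 2 * (\<tau> - 1)"
    using \<tau> by (simp add: \<tau>_def)
  ultimately have M: "n powr (1/3 + 2 * \<epsilon>) / (\<tau> - 1) \<le> 2 * p"
    using p \<tau> by (simp add: \<tau>_def field_simps mult_left_mono)
  have "2 * bad_cycle_factor k \<Delta> (n powr (1/3 + 2 * \<epsilon>)) \<tau>
      = 8 * real k ^ 2 * \<Delta> + 4 * real k * \<Delta> * (n powr (1/3 + 2 * \<epsilon>) / (\<tau> - 1))"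
    by (simp add: bad_cycle_factor_def algebra_simps)
  also have "\<dots> \<le> 8 * real k ^ 2 * \<Delta> * p + 4 * real k * \<Delta> * (2 * p)"
  proof (rule add_mono)
    have "8 * real k ^ 2 * \<Delta> * 1 \<le> 8 * real k ^ 2 * \<Delta> * p"
      using p \<Delta> by (intro mult_left_mono) auto
    then show "8 * real k ^ 2 * \<Delta> \<le> 8 * real k ^ 2 * \<Delta> * p"
      by simp
    show "4 * real k * \<Delta> * (n powr (1/3 + 2 * \<epsilon>) / (\<tau> - 1)) \<le> 4 * real k * \<Delta> * (2 * p)"
      using M \<Delta> by (intro mult_left_mono) auto
  qed
  also have "\<dots> = 8 * K * (real k ^ 2 + real k) * n powr (2/3 + \<epsilon>)"
    using n by (simp add: \<Delta>_def p_def q_def powr_add[symmetric] algebra_simps)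
  finally show ?thesis
    by (simp add: \<Delta> \<tau>_def)
qed

lemma bad_cycle_factor_le_powr:
  fixes n \<epsilon> K :: real
  assumes K: "0 < K" and k\<epsilon>: "2 \<le> real k * \<epsilon>"
    and n: "1 \<le> n" "(72 * K * (real k ^ 2 + real k)) ^ k \<le> n" and \<tau>: "2 \<le> n powr (2 * \<epsilon>)"
  shows "n * (2 * bad_cycle_factor k (K * n powr (1/3 + \<epsilon>)) (n powr (1/3 + 2 * \<epsilon>)) (n powr (2 * \<epsilon>))) ^ k
    \<le> ((n powr (1/3 + \<epsilon>)) ^ 2 / 9) ^ k"
proof -
  define c where "c = 8 * K * (real k ^ 2 + real k)"
  let ?\<beta> = "bad_cycle_factor k (K * n powr (1/3 + \<epsilon>)) (n powr (1/3 + 2 * \<epsilon>)) (n powr (2 * \<epsilon>))"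
  let ?m = "n powr (2/3 + \<epsilon>)"
  have "0 \<le> ?\<beta>"
    using K \<tau> by (simp add: bad_cycle_factor_def)
  moreover have "2 * ?\<beta> \<le> c * ?m"
    using two_bad_cycle_factor_le[OF n(1) \<tau> K, of k] by (simp add: c_def)
  ultimately have "(2 * ?\<beta>) ^ k \<le> (c * ?m) ^ k"
    by (intro power_mono) simp_all
  then have "n * (2 * ?\<beta>) ^ k \<le> n * (c * ?m) ^ k"
    using n by (intro mult_left_mono) simp_all
  also have "\<dots> = (9 * c) ^ k * n * (?m / 9) ^ k"
    by (simp add: power_mult_distrib power_divide)
  also have "\<dots> \<le> n * n * (?m / 9) ^ k"
  proof (rule mult_right_mono)
    have "9 * c = 72 * K * (real k ^ 2 + real k)"
      by (simp add: c_def)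
    then have "(9 * c) ^ k \<le> n"
      using n(2) by (simp only:)
    then show "(9 * c) ^ k * n \<le> n * n"
      by (rule mult_right_mono) (use n in simp)
  qed simp
  also have "\<dots> \<le> n powr (\<epsilon> * real k) * (?m / 9) ^ k"
  proof (rule mult_right_mono)
    have "n * n = n powr 2"
      using n by (simp add: powr_realpow power2_eq_square)
    also have "\<dots> \<le> n powr (\<epsilon> * real k)"
      using n k\<epsilon> by (intro powr_mono) (auto simp: mult.commute)
    finally show "n * n \<le> n powr (\<epsilon> * real k)" .
  qed simp
  also have "\<dots> = ((n powr (1/3 + \<epsilon>)) ^ 2 / 9) ^ k"
  proof -
    have "n powr (\<epsilon> * real k) = (n powr \<epsilon>) ^ k"
      using n by (simp add: powr_powr[symmetric] powr_realpow)
    moreover have "(n powr (1/3 + \<epsilon>)) ^ 2 = n powr \<epsilon> * ?m"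
      by (simp add: power2_eq_square flip: powr_add) (simp add: field_simps)
    ultimately show ?thesis
      by (simp add: power_mult_distrib[symmetric] times_divide_eq_right)
  qed
  finally show ?thesis .
qed

lemma bad_cycle_factor_eventually:
  fixes \<epsilon> K :: real and k :: nat
  assumes \<epsilon>: "0 < \<epsilon>" and K: "0 < K" and k\<epsilon>: "2 \<le> real k * \<epsilon>"
  shows "\<exists>N::nat. \<forall>n\<ge>N. 2 \<le> real n powr (2 * \<epsilon>) \<and>
    real n * (2 * bad_cycle_factor k (K * real n powr (1/3 + \<epsilon>)) (real n powr (1/3 + 2 * \<epsilon>))
      (real n powr (2 * \<epsilon>))) ^ k \<le> ((real n powr (1/3 + \<epsilon>)) ^ 2 / 9) ^ k"
proof (intro exI allI impI conjI)
  fix n :: nat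
  assume "nat \<lceil>max ((72 * K * (real k ^ 2 + real k)) ^ k) (2 powr (1 / (2 * \<epsilon>)))\<rceil> + 1 \<le> n"
  then have n: "1 \<le> real n" "(72 * K * (real k ^ 2 + real k)) ^ k \<le> real n"
    "2 powr (1 / (2 * \<epsilon>)) \<le> real n"
    by linarith+
  have "2 = (2 powr (1 / (2 * \<epsilon>))) powr (2 * \<epsilon>)"
    using \<epsilon> by (simp add: powr_powr)
  also have "\<dots> \<le> real n powr (2 * \<epsilon>)"
    using n \<epsilon> by (intro powr_mono2) auto
  finally show \<tau>: "2 \<le> real n powr (2 * \<epsilon>)" .
  show "real n * (2 * bad_cycle_factor k (K * real n powr (1/3 + \<epsilon>)) (real n powr (1/3 + 2 * \<epsilon>))
      (real n powr (2 * \<epsilon>))) ^ k \<le> ((real n powr (1/3 + \<epsilon>)) ^ 2 / 9) ^ k"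
    by (rule bad_cycle_factor_le_powr[OF K k\<epsilon> n(1,2) \<tau>])
qed

context sgraph
begin

lemma closed_walks_ge_powr:
  assumes V: "card V = n" and n: "0 < n"
    and edges: "(1/6) * real n powr (4/3 + \<epsilon>) \<le> real (card (edges V E))"
  shows "((real n powr (1/3 + \<epsilon>)) ^ 2 / 9) ^ k \<le> closed_walks k"
proof -
  define D where "D = real n powr (1/3 + \<epsilon>)"
  have "4/3 + \<epsilon> = 1 + (1/3 + \<epsilon>)"
    by simp
  then have "real n powr (4/3 + \<epsilon>) = real n * D"
    using n by (simp only: powr_add D_def) simp
  then have "D / 3 \<le> 2 * real (card (edges V E)) / card V"
    using edges n V by (simp add: field_simps)
  then have "(D / 3) ^ (2 * k) \<le> (2 * real (card (edges V E)) / card V) ^ (2 * k)"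
    by (rule power_mono) (simp add: D_def)
  then have "(D / 3) ^ (2 * k) \<le> closed_walks k"
    using closed_walks_ge[of k] V n by simp
  then show ?thesis
    by (simp add: D_def power_mult power_divide)
qed

lemma card_good_cycles_ge_powr:
  fixes \<epsilon> K :: real
  assumes K: "0 < K" and k: "0 < k" and k\<epsilon>: "2 \<le> real k * \<epsilon>"
    and V: "card V = n" and \<tau>: "2 \<le> real n powr (2 * \<epsilon>)"
    and large: "real n * (2 * bad_cycle_factor k (K * real n powr (1/3 + \<epsilon>))
      (real n powr (1/3 + 2 * \<epsilon>)) (real n powr (2 * \<epsilon>))) ^ k \<le> ((real n powr (1/3 + \<epsilon>)) ^ 2 / 9) ^ k"
    and edges: "(1/6) * real n powr (4/3 + \<epsilon>) \<le> real (card (edges V E))"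
    and deg: "\<forall>v\<in>V. real (degree V E v) \<le> K * real n powr (1/3 + \<epsilon>)"
    and C4: "\<forall>e\<in>edges V E. real (card {C \<in> C4_copies V E. e \<in> C}) \<le> real n powr (1/3 + 2 * \<epsilon>)"
  shows "6 powr (- 2 * real k) * real n powr ((1/3 + \<epsilon>) * (2 * real k))
    \<le> real (card {x \<in> hom_cycles V E (2 * k). inj_on x {0..<2 * k}
      \<and> (\<forall>i<2 * k. real (codegree V E (x i) (x ((i + 2) mod (2 * k)))) \<le> real n powr (2 * \<epsilon>))})"
proof -
  have n: "0 < n"
    using \<tau> by (cases "n = 0") auto
  note walks = closed_walks_ge_powr[OF V n edges, of k]
  have k1: "k = 1 \<Longrightarrow> real (card V) \<le> real n powr (2 * \<epsilon>)"
    using k\<epsilon> n V powr_mono[of 1 "2 * \<epsilon>" "real n"] by simp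
  have large': "real (card V) * (2 * bad_cycle_factor k (K * real n powr (1/3 + \<epsilon>))
      (real n powr (1/3 + 2 * \<epsilon>)) (real n powr (2 * \<epsilon>))) ^ k \<le> closed_walks k"
    using order_trans[OF large walks] V by simp
  have "closed_walks k / 2 \<le> real (card (good_cycles (2 * k) (real n powr (2 * \<epsilon>))))"
    by (rule card_good_cycles_ge_half[OF k \<tau> k1 _ _ _ _ large']) (use K deg C4 in auto)
  then show ?thesis
    using walks six_powr_mult_powr_le[of "real n" k "1/3 + \<epsilon>"] n k by (simp add: good_cycles_def)
qed

end

theorem lemma2p17:
  fixes \<epsilon> K :: real
  assumes "\<epsilon> > 0" and "K > 0"
  shows "\<forall>k::nat. real k \<ge> 2 / \<epsilon> \<longrightarrow>
    (\<exists>N::nat. \<forall>n \<ge> N. \<forall>(V :: nat set) E.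
       simple_graph V E \<and> card V = n
       \<and> real (card (edges V E)) \<ge> (1/6) * real n powr (4/3 + \<epsilon>)
       \<and> (\<forall>v\<in>V. real (degree V E v) \<le> K * real n powr (1/3 + \<epsilon>))
       \<and> (\<forall>e\<in>edges V E. real (card {C \<in> C4_copies V E. e \<in> C}) \<le> real n powr (1/3 + 2*\<epsilon>))
       \<longrightarrow> real (card {x \<in> hom_cycles V E (2*k). inj_on x {0..<2*k}
                \<and> (\<forall>i<2*k. real (codegree V E (x i) (x ((i + 2) mod (2*k)))) \<le> real n powr (2*\<epsilon>))})
           \<ge> 6 powr (- 2 * real k) * real n powr ((1/3 + \<epsilon>) * (2 * real k)))"
proof (intro allI impI)
  fix k :: nat
  assume "2 / \<epsilon> \<le> real k"
  then have k\<epsilon>: "2 \<le> real k * \<epsilon>"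
    using assms by (simp add: field_simps)
  then have k: "0 < k"
    by (cases k) auto
  obtain N where N: "\<forall>n\<ge>N. 2 \<le> real n powr (2 * \<epsilon>) \<and>
      real n * (2 * bad_cycle_factor k (K * real n powr (1/3 + \<epsilon>)) (real n powr (1/3 + 2 * \<epsilon>))
        (real n powr (2 * \<epsilon>))) ^ k \<le> ((real n powr (1/3 + \<epsilon>)) ^ 2 / 9) ^ k"
    using bad_cycle_factor_eventually[OF assms k\<epsilon>] by blast
  show "\<exists>N::nat. \<forall>n \<ge> N. \<forall>(V :: nat set) E.
       simple_graph V E \<and> card V = n
       \<and> real (card (edges V E)) \<ge> (1/6) * real n powr (4/3 + \<epsilon>)
       \<and> (\<forall>v\<in>V. real (degree V E v) \<le> K * real n powr (1/3 + \<epsilon>))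
       \<and> (\<forall>e\<in>edges V E. real (card {C \<in> C4_copies V E. e \<in> C}) \<le> real n powr (1/3 + 2*\<epsilon>))
       \<longrightarrow> real (card {x \<in> hom_cycles V E (2*k). inj_on x {0..<2*k}
                \<and> (\<forall>i<2*k. real (codegree V E (x i) (x ((i + 2) mod (2*k)))) \<le> real n powr (2*\<epsilon>))})
           \<ge> 6 powr (- 2 * real k) * real n powr ((1/3 + \<epsilon>) * (2 * real k))"
    using N sgraph.card_good_cycles_ge_powr[OF sgraph.intro \<open>K > 0\<close> k k\<epsilon>]
    by (intro exI[of _ N]) auto
qed

end
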